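(* Let $L$ be a distributive lattice and $\mathbf x,\mathbf y\in L^n$. Then $\mathbf x$ and $\mathbf y$ are g-comonotone if and only if they are dually g-comonotone.
   Context: $\mathbf x,\mathbf y\in L^n$ are g-comonotone if for every pair $i,j\in\{1,\dots,n\}$: $(x_i\vee y_i)\wedge(x_j\vee y_j)=(x_i\wedge x_j)\vee(y_i\wedge y_j)$. They are dually g-comonotone if for every pair $i,j$: $(x_i\wedge y_i)\vee(x_j\wedge y_j)=(x_i\vee x_j)\wedge(y_i\vee y_j)$. *)

theory Defs
  imports Main
begin

text \<open>Vectors in L^n are represented as functions nat => L, with components
  indexed by i < n (i.e. 0..n-1 instead of 1..n).\<close>

definition g_comonotone :: "nat \<Rightarrow> (nat \<Rightarrow> 'a::lattice) \<Rightarrow> (nat \<Rightarrow> 'a) \<Rightarrow> bool" where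
  "g_comonotone n x y \<longleftrightarrow> (\<forall>i<n. \<forall>j<n.
     inf (sup (x i) (y i)) (sup (x j) (y j)) = sup (inf (x i) (x j)) (inf (y i) (y j)))"

definition dually_g_comonotone :: "nat \<Rightarrow> (nat \<Rightarrow> 'a::lattice) \<Rightarrow> (nat \<Rightarrow> 'a) \<Rightarrow> bool" where
  "dually_g_comonotone n x y \<longleftrightarrow> (\<forall>i<n. \<forall>j<n.
     sup (inf (x i) (y i)) (inf (x j) (y j)) = inf (sup (x i) (x j)) (sup (y i) (y j)))"

end

theory Submission
  imports Defs
begin

text \<open>Expanding both sides, the condition for a pair (a, b), (c, d) of coordinates reads
  a\<sqinter>d \<squnion> b\<sqinter>c \<le> a\<sqinter>c \<squnion> b\<sqinter>d, and its dual reads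
  a\<sqinter>d \<squnion> b\<sqinter>c \<le> a\<sqinter>b \<squnion> c\<sqinter>d.
  Both inequalities are equivalent, since meeting a\<sqinter>d \<squnion> b\<sqinter>c with either
  right-hand side yields the join of all four triple meets of a, b, c, d.\<close>

lemma inf_sup_sup_expand:
  fixes a :: "'a::distrib_lattice"
  shows "inf (sup a b) (sup c d) = sup (sup (inf a c) (inf b d)) (sup (inf a d) (inf b c))"
  by (simp add: inf_sup_distrib1 inf_sup_distrib2 sup.assoc sup.commute sup.left_commute)

lemma inf_cross_terms_eq:
  fixes a :: "'a::distrib_lattice"
  shows "inf (sup (inf a d) (inf b c)) (sup (inf a c) (inf b d))
       = inf (sup (inf a d) (inf b c)) (sup (inf a b) (inf c d))"
  by (simp add: inf_sup_distrib1 inf_sup_distrib2 inf_aci sup.assoc sup.commute sup.left_commute)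

lemma inf_sup_eq_sup_inf_iff_dual:
  fixes a :: "'a::distrib_lattice"
  shows "inf (sup a b) (sup c d) = sup (inf a c) (inf b d)
     \<longleftrightarrow> sup (inf a b) (inf c d) = inf (sup a c) (sup b d)"
proof -
  let ?cross = "sup (inf a d) (inf b c)"
  have "inf (sup a b) (sup c d) = sup (inf a c) (inf b d) \<longleftrightarrow> ?cross \<le> sup (inf a c) (inf b d)"
    by (simp add: inf_sup_sup_expand sup.absorb_iff1)
  also have "\<dots> \<longleftrightarrow> ?cross \<le> sup (inf a b) (inf c d)"
    by (simp only: le_iff_inf inf_cross_terms_eq)
  also have "\<dots> \<longleftrightarrow> sup (inf a b) (inf c d) = inf (sup a c) (sup b d)"
    by (auto simp add: inf_sup_sup_expand[of a c b d] inf.commute[of c b] sup.absorb_iff1)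
  finally show ?thesis .
qed

theorem theorem1:
  fixes n :: nat and x y :: "nat \<Rightarrow> 'a::distrib_lattice"
  shows "g_comonotone n x y \<longleftrightarrow> dually_g_comonotone n x y"
  unfolding g_comonotone_def dually_g_comonotone_def
  by (simp only: inf_sup_eq_sup_inf_iff_dual)

end
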